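(* Assume the standing conventions of the context. Suppose both $Z$ and $Z'$ are regular and $\mathcal D_{Z,Z'}$ is one-to-one (i.e. $D_Z=\{Z'\}$ and $D_{Z'}=\{Z\}$). Let $\Lambda\in\overline{\mathcal S}_Z$, $\Lambda'\in\overline{\mathcal S}_{Z'}$. (i) If $m'=m+1$, then $(\Lambda,\Lambda')\in\overline{\mathcal B}^+_{Z,Z'}$ if and only if $\Lambda'=\theta^+(\Lambda)$, where $\theta$ is the map on entries defined by $\theta(a_i)=d_i$ ($1\le i\le m+1$), $\theta(b_i)=c_{i+1}$ ($1\le i\le m$), and $\theta^+(\Lambda_M)=\Lambda_{\theta(M)}$ for $M\subset Z_{\mathrm I}$. (ii) If $m'=m$, then $(\Lambda,\Lambda')\in\overline{\mathcal B}^+_{Z,Z'}$ if and only if $\Lambda=\theta^+(\Lambda')$, where $\theta$ is defined by $\theta(c_i)=b_i$, $\theta(d_i)=a_{i+1}$ ($1\le i\le m$), and $\theta^+(\Lambda_N)=\Lambda_{\theta(N)}$ for $N\subset Z'_{\mathrm I}$.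
   Context: A symbol is an array $\Lambda=\binom{a'_1,\ldots,a'_{m_1}}{b'_1,\ldots,b'_{m_2}}$ of two strictly decreasing finite sequences of nonnegative integers (top row, bottom row); its defect is $\mathrm{def}(\Lambda)=m_1-m_2$. Standing assumptions: $Z=\binom{a_1,\ldots,a_{m+1}}{b_1,\ldots,b_m}$ is a special symbol of defect $1$, i.e. $a_1\ge b_1\ge a_2\ge b_2\ge\cdots\ge b_m\ge a_{m+1}$; $Z'=\binom{c_1,\ldots,c_{m'}}{d_1,\ldots,d_{m'}}$ is a special symbol of defect $0$, i.e. $c_1\ge d_1\ge c_2\ge d_2\ge\cdots\ge c_{m'}\ge d_{m'}$; and $m'\in\{m,m+1\}$. For a symbol $Y$, $Y_{\mathrm I}$ is the set of entries of $Y$ occurring in exactly one row; $Y$ is regular if no entry occurs in both rows (then $Y_{\mathrm I}$ is the set of all entries). For $M\subset Z_{\mathrm I}$, $\Lambda_M$ is the symbol obtained from $Z$ by moving every entry of $M$ to the other row (rows re-sorted decreasingly); for $N\subset Z'_{\mathrm I}$, $\Lambda_N$ is obtained from $Z'$ in the same way. $\overline{\mathcal S}_Z=\{\Lambda_M: M\subset Z_{\mathrm I}\}$, $\overline{\mathcal S}_{Z'}=\{\Lambda_N:N\subset Z'_{\mathrm I}\}$; $\mathcal S_{Z,1}$ (resp. $\mathcal S_{Z',0}$) is the set of elements of $\overline{\mathcal S}_Z$ of defect $1$ (resp. of $\overline{\mathcal S}_{Z'}$ of defect $0$). Relation $\overline{\mathcal B}^+_{Z,Z'}\subset\overline{\mathcal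 S}_Z\times\overline{\mathcal S}_{Z'}$: for $\Lambda=\binom{a'_1,\ldots,a'_{m_1}}{b'_1,\ldots,b'_{m_2}}\in\overline{\mathcal S}_Z$ and $\Lambda'=\binom{c'_1,\ldots,c'_{m'_1}}{d'_1,\ldots,d'_{m'_2}}\in\overline{\mathcal S}_{Z'}$, $(\Lambda,\Lambda')\in\overline{\mathcal B}^+_{Z,Z'}$ iff $\mathrm{def}(\Lambda')=1-\mathrm{def}(\Lambda)$ and: if $m'=m$, $a'_i>d'_i\ge a'_{i+1}$ for $1\le i\le m'_2$ and $b'_{i-1}>c'_i\ge b'_i$ for $1\le i\le m'_1$; if $m'=m+1$, $a'_i\ge d'_i>a'_{i+1}$ for $1\le i\le m'_2$ and $b'_{i-1}\ge c'_i>b'_i$ for $1\le i\le m'_1$; here $b'_0=+\infty$ and nonexistent entries $a'_j,b'_j$ beyond the row lengths are $-\infty$. Then $\mathcal D_{Z,Z'}=\overline{\mathcal B}^+_{Z,Z'}\cap(\mathcal S_{Z,1}\times\mathcal S_{Z',0})$, $D_Z=\{\Lambda'\mid (Z,\Lambda')\in\mathcal D_{Z,Z'}\}$ and $D_{Z'}=\{\Lambda\mid(\Lambda,Z')\in\mathcal D_{Z,Z'}\}$. *)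

theory Defs
  imports Main "HOL-Library.Extended_Real"
begin

text \<open>A symbol: two strictly decreasing finite sequences of nonnegative integers,
  represented by the (finite) sets of their entries (top row, bottom row).\<close>
type_synonym symbol = "nat set \<times> nat set"

definition is_symbol :: "symbol \<Rightarrow> bool" where
  "is_symbol S \<longleftrightarrow> finite (fst S) \<and> finite (snd S)"

text \<open>The i-th entry (1-indexed, i-th largest) of a row.\<close>
definition row_entry :: "nat set \<Rightarrow> nat \<Rightarrow> nat" where
  "row_entry X i = rev (sorted_list_of_set X) ! (i - 1)"

definition ext_entry :: "nat set \<Rightarrow> nat \<Rightarrow> ereal" where
  "ext_entry X i = (if 1 \<le> i \<and> i \<le> card X then ereal (real (row_entry X i)) else -\<infinity>)"

definition ext_entry0 :: "nat set \<Rightarrow> nat \<Rightarrow> ereal" where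
  "ext_entry0 X i = (if i = 0 then \<infinity> else ext_entry X i)"

definition defect :: "symbol \<Rightarrow> int" where
  "defect S = int (card (fst S)) - int (card (snd S))"

definition special1 :: "symbol \<Rightarrow> bool" where
  "special1 Z \<longleftrightarrow> is_symbol Z \<and> card (fst Z) = card (snd Z) + 1 \<and>
     (\<forall>i. 1 \<le> i \<and> i \<le> card (snd Z) \<longrightarrow>
        row_entry (fst Z) i \<ge> row_entry (snd Z) i \<and>
        row_entry (snd Z) i \<ge> row_entry (fst Z) (i + 1))"

definition special0 :: "symbol \<Rightarrow> bool" where
  "special0 Z \<longleftrightarrow> is_symbol Z \<and> card (fst Z) = card (snd Z) \<and>
     (\<forall>i. 1 \<le> i \<and> i \<le> card (fst Z) \<longrightarrow> row_entry (fst Z) i \<ge> row_entry (snd Z) i) \<and>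
     (\<forall>i. 1 \<le> i \<and> i < card (fst Z) \<longrightarrow> row_entry (snd Z) i \<ge> row_entry (fst Z) (i + 1))"

definition singles :: "symbol \<Rightarrow> nat set" where
  "singles Z = (fst Z - snd Z) \<union> (snd Z - fst Z)"

definition regular :: "symbol \<Rightarrow> bool" where
  "regular Z \<longleftrightarrow> fst Z \<inter> snd Z = {}"

definition move :: "symbol \<Rightarrow> nat set \<Rightarrow> symbol" where
  "move Z M = ((fst Z - M) \<union> (snd Z \<inter> M), (snd Z - M) \<union> (fst Z \<inter> M))"

definition Sbar :: "symbol \<Rightarrow> symbol set" where
  "Sbar Z = {move Z M | M. M \<subseteq> singles Z}"

definition Sdef :: "symbol \<Rightarrow> int \<Rightarrow> symbol set" where
  "Sdef Z k = {L \<in> Sbar Z. defect L = k}"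

text \<open>The relation B^+_{Z,Z'} (with m = card (snd Z), m' = card (fst Z')).\<close>
definition Bplus :: "symbol \<Rightarrow> symbol \<Rightarrow> (symbol \<times> symbol) set" where
  "Bplus Z Z' = {(L, L'). L \<in> Sbar Z \<and> L' \<in> Sbar Z' \<and> defect L' = 1 - defect L \<and>
     (let a = ext_entry (fst L); b = ext_entry0 (snd L);
          c = ext_entry (fst L'); d = ext_entry (snd L') in
      (card (fst Z') = card (snd Z) \<longrightarrow>
         (\<forall>i. 1 \<le> i \<and> i \<le> card (snd L') \<longrightarrow> a i > d i \<and> d i \<ge> a (i + 1)) \<and>
         (\<forall>i. 1 \<le> i \<and> i \<le> card (fst L') \<longrightarrow> b (i - 1) > c i \<and> c i \<ge> b i)) \<and>
      (card (fst Z') = card (snd Z) + 1 \<longrightarrow>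
         (\<forall>i. 1 \<le> i \<and> i \<le> card (snd L') \<longrightarrow> a i \<ge> d i \<and> d i > a (i + 1)) \<and>
         (\<forall>i. 1 \<le> i \<and> i \<le> card (fst L') \<longrightarrow> b (i - 1) \<ge> c i \<and> c i > b i)))}"

definition Dset :: "symbol \<Rightarrow> symbol \<Rightarrow> (symbol \<times> symbol) set" where
  "Dset Z Z' = Bplus Z Z' \<inter> (Sdef Z 1 \<times> Sdef Z' 0)"

definition D_Z :: "symbol \<Rightarrow> symbol \<Rightarrow> symbol set" where
  "D_Z Z Z' = {L'. (Z, L') \<in> Dset Z Z'}"

definition D_Z' :: "symbol \<Rightarrow> symbol \<Rightarrow> symbol set" where
  "D_Z' Z Z' = {L. (L, Z') \<in> Dset Z Z'}"

definition theta1_img :: "symbol \<Rightarrow> symbol \<Rightarrow> nat set \<Rightarrow> nat set" where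
  "theta1_img Z Z' M =
     {row_entry (snd Z') i | i. 1 \<le> i \<and> i \<le> card (snd Z) + 1 \<and> row_entry (fst Z) i \<in> M} \<union>
     {row_entry (fst Z') (i + 1) | i. 1 \<le> i \<and> i \<le> card (snd Z) \<and> row_entry (snd Z) i \<in> M}"

definition theta2_img :: "symbol \<Rightarrow> symbol \<Rightarrow> nat set \<Rightarrow> nat set" where
  "theta2_img Z Z' N =
     {row_entry (snd Z) i | i. 1 \<le> i \<and> i \<le> card (snd Z) \<and> row_entry (fst Z') i \<in> N} \<union>
     {row_entry (fst Z) (i + 1) | i. 1 \<le> i \<and> i \<le> card (snd Z) \<and> row_entry (snd Z') i \<in> N}"

end

(* The inequalities defining B^+ only compare entries, so they can be restated with the counting
   functions count_ge X t = #{x in X. t <= x}.  If D_{Z,Z'} is one-to-one, the entries of Z and Z'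
   interlace rigidly: c_1 > a_1 >= d_1 > b_1 >= c_2 > ... when m' = m + 1, and
   a_1 > c_1 >= b_1 > d_1 >= a_2 > ... when m' = m.  Otherwise, going down from the least entries,
   one finds two neighbouring entries of Z' (resp. Z) whose exchange gives a second element of
   D_Z (resp. D_Z').  Under this interlacing theta sends the entry of rank k of one symbol to the
   entry of rank k + 1 of the other, it preserves the counts at all relevant thresholds, and a set
   of entries is determined by these counts; so the counting conditions for a pair in B^+ say
   precisely that one member is the image of the other under theta^+. *)

theory Submission
  imports Defs
begin

section \<open>Counting entries above a threshold\<close>

definition count_ge :: "nat set \<Rightarrow> nat \<Rightarrow> nat" where
  "count_ge X t = card {x \<in> X. t \<le> x}"

lemma count_ge_le_card: "finite X \<Longrightarrow> count_ge X t \<le> card X"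
  unfolding count_ge_def by (rule card_mono) auto

lemma count_ge_antimono: "finite X \<Longrightarrow> t \<le> s \<Longrightarrow> count_ge X s \<le> count_ge X t"
  unfolding count_ge_def by (rule card_mono) auto

lemma count_ge_strict_antimono:
  assumes "finite X" "y \<in> X" "y < x"
  shows "count_ge X x < count_ge X y"
proof -
  have "{z \<in> X. x \<le> z} \<subseteq> {z \<in> X. y \<le> z} - {y}" using assms by auto
  then have "count_ge X x \<le> card ({z \<in> X. y \<le> z} - {y})"
    unfolding count_ge_def using assms by (intro card_mono) auto
  also have "\<dots> < count_ge X y" unfolding count_ge_def using assms by (intro card_Diff1_less) auto
  finally show ?thesis .
qed

lemma count_ge_Suc_notin: "t \<notin> X \<Longrightarrow> count_ge X (Suc t) = count_ge X t"
  unfolding count_ge_def by (rule arg_cong[where f = card]) (auto simp: Suc_le_eq order_le_less)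

lemma count_ge_Suc_in: "finite X \<Longrightarrow> t \<in> X \<Longrightarrow> count_ge X t = count_ge X (Suc t) + 1"
proof -
  assume "finite X" "t \<in> X"
  moreover have "{x \<in> X. t \<le> x} = insert t {x \<in> X. Suc t \<le> x}" using \<open>t \<in> X\<close> by auto
  ultimately show ?thesis unfolding count_ge_def by simp
qed

lemma count_ge_Un_disjoint:
  "finite X \<Longrightarrow> finite Y \<Longrightarrow> X \<inter> Y = {} \<Longrightarrow> count_ge (X \<union> Y) t = count_ge X t + count_ge Y t"
  unfolding count_ge_def by (subst card_Un_disjoint[symmetric]) (auto intro: arg_cong[where f = card])

lemma count_ge_image:
  assumes "inj_on f X" "\<And>x. x \<in> X \<Longrightarrow> t \<le> f x \<longleftrightarrow> s \<le> x"
  shows "count_ge (f ` X) t = count_ge X s"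
proof -
  have "{y \<in> f ` X. t \<le> y} = f ` {x \<in> X. s \<le> x}" using assms(2) by auto
  moreover have "inj_on f {x \<in> X. s \<le> x}" using assms(1) by (rule inj_on_subset) auto
  ultimately show ?thesis unfolding count_ge_def by (simp add: card_image)
qed

lemma count_ge_swap:
  assumes "finite X" "y \<in> X" "x \<notin> X"
  shows "count_ge (insert x (X - {y})) t + (if t \<le> y then 1 else 0)
    = count_ge X t + (if t \<le> x then 1 else 0)"
proof -
  let ?S = "{z \<in> X. t \<le> z}"
  have "finite ?S" using assms by auto
  then have "card (?S - {y}) + (if t \<le> y then 1 else 0) = card ?S"
  proof (cases "t \<le> y")
    case True
    then have "y \<in> ?S" using assms(2) by simp
    then show ?thesis using True \<open>finite ?S\<close> card_Suc_Diff1 by fastforce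
  qed simp
  moreover have "{z \<in> insert x (X - {y}). t \<le> z} = (if t \<le> x then insert x (?S - {y}) else ?S - {y})"
    by auto
  ultimately show ?thesis unfolding count_ge_def using assms \<open>finite ?S\<close> by auto
qed

text \<open>Compare the two sets at the largest element of their symmetric difference.\<close>
lemma subset_eq_if_count_ge_eq:
  assumes "finite W" "X \<subseteq> W" "Y \<subseteq> W" "\<And>w. w \<in> W \<Longrightarrow> count_ge X w = count_ge Y w"
  shows "X = Y"
proof (rule ccontr)
  assume "X \<noteq> Y"
  have "finite X" "finite Y" using assms(1-3) finite_subset by auto
  define S where "S = (X - Y) \<union> (Y - X)"
  have "finite S" "S \<noteq> {}" using \<open>finite X\<close> \<open>finite Y\<close> \<open>X \<noteq> Y\<close> unfolding S_def by auto
  define x where "x = Max S"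
  have "x \<in> S" and x_max: "\<And>z. z \<in> S \<Longrightarrow> z \<le> x"
    using \<open>finite S\<close> \<open>S \<noteq> {}\<close> unfolding x_def by auto
  have count_above: "count_ge P x = count_ge Q x + 1"
    if "finite Q" "x \<in> P" "x \<notin> Q" "S = (P - Q) \<union> (Q - P)" for P Q
  proof -
    have "z \<in> P \<longleftrightarrow> z \<in> Q" if "x < z" for z
      using x_max[of z] \<open>S = (P - Q) \<union> (Q - P)\<close> \<open>x < z\<close> by auto
    then have "{z \<in> P. x \<le> z} = insert x {z \<in> Q. x \<le> z}" "x \<notin> {z \<in> Q. x \<le> z}"
      using that by (auto simp: order_le_less)
    then show ?thesis unfolding count_ge_def using \<open>finite Q\<close> by simp
  qed
  have "x \<in> W" using \<open>x \<in> S\<close> assms(2,3) unfolding S_def by auto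
  then show False
    using count_above[of Y X] count_above[of X Y] \<open>finite X\<close> \<open>finite Y\<close> \<open>x \<in> S\<close> assms(4)[of x]
    unfolding S_def by auto
qed

lemma row_entry_eq_nth:
  assumes "finite X" "1 \<le> i" "i \<le> card X"
  shows "row_entry X i = sorted_list_of_set X ! (card X - i)"
  using assms by (simp add: row_entry_def rev_nth length_sorted_list_of_set Suc_diff_le)

lemma row_entry_in:
  assumes "finite X" "1 \<le> i" "i \<le> card X"
  shows "row_entry X i \<in> X"
  using assms row_entry_eq_nth[OF assms] by (metis diff_less length_sorted_list_of_set less_le_trans
      nth_mem set_sorted_list_of_set zero_less_one)

lemma row_entry_less:
  assumes "finite X" "1 \<le> i" "i < j" "j \<le> card X"
  shows "row_entry X j < row_entry X i"
  using assms row_entry_eq_nth[of X i] row_entry_eq_nth[of X j]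
    sorted_wrt_nth_less[OF sorted_list_of_set.strict_sorted_key_list_of_set[of X], of "card X - j" "card X - i"]
  by (simp add: length_sorted_list_of_set)

lemma row_entry_le:
  assumes "finite X" "1 \<le> i" "i \<le> j" "j \<le> card X"
  shows "row_entry X j \<le> row_entry X i"
  using row_entry_less[OF assms(1,2), of j] assms by (cases "i = j") auto

lemma count_ge_row_entry:
  assumes "finite X" "1 \<le> i" "i \<le> card X"
  shows "count_ge X (row_entry X i) = i"
proof -
  have "{x \<in> X. row_entry X i \<le> x} = row_entry X ` {1..i}"
  proof
    show "row_entry X ` {1..i} \<subseteq> {x \<in> X. row_entry X i \<le> x}"
      using assms row_entry_in row_entry_le by auto
    show "{x \<in> X. row_entry X i \<le> x} \<subseteq> row_entry X ` {1..i}"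
    proof
      fix x assume x: "x \<in> {x \<in> X. row_entry X i \<le> x}"
      then obtain j where "j < card X" "x = sorted_list_of_set X ! j"
        using assms(1)
        by (metis in_set_conv_nth length_sorted_list_of_set mem_Collect_eq set_sorted_list_of_set)
      then have "x = row_entry X (card X - j)" "1 \<le> card X - j"
        using row_entry_eq_nth[OF assms(1), of "card X - j"] by auto
      moreover have "card X - j \<le> i"
        using x row_entry_less[OF assms(1) assms(2), of "card X - j"] assms \<open>x = row_entry X (card X - j)\<close>
        by (metis (mono_tags, lifting) diff_le_self leD mem_Collect_eq not_le_imp_less)
      ultimately show "x \<in> row_entry X ` {1..i}" by auto
    qed
  qed
  moreover have "inj_on (row_entry X) {1..i}"
    using assms row_entry_less[OF assms(1)]
    by (intro inj_onI) (metis atLeastAtMost_iff le_trans linorder_neq_iff less_irrefl)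
  ultimately show ?thesis unfolding count_ge_def by (simp add: card_image)
qed

lemma row_entry_count_ge:
  assumes "finite X" "x \<in> X"
  shows "1 \<le> count_ge X x" "count_ge X x \<le> card X" "row_entry X (count_ge X x) = x"
proof -
  obtain j where "j < card X" "x = sorted_list_of_set X ! j"
    using assms by (metis in_set_conv_nth length_sorted_list_of_set set_sorted_list_of_set)
  then have "row_entry X (card X - j) = x"
    using row_entry_eq_nth[OF assms(1), of "card X - j"] by simp
  moreover have "count_ge X x = card X - j"
    using count_ge_row_entry[OF assms(1), of "card X - j"] \<open>j < card X\<close> calculation by simp
  ultimately show "1 \<le> count_ge X x" "count_ge X x \<le> card X" "row_entry X (count_ge X x) = x"
    using \<open>j < card X\<close> by auto
qed

lemma count_ge_inj:
  "finite X \<Longrightarrow> x \<in> X \<Longrightarrow> y \<in> X \<Longrightarrow> count_ge X x = count_ge X y \<Longrightarrow> x = y"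
  by (metis row_entry_count_ge(3))

lemma le_iff_count_ge_le:
  assumes "finite X" "x \<in> X"
  shows "t \<le> x \<longleftrightarrow> count_ge X x \<le> count_ge X t"
  using count_ge_antimono[OF assms(1)] count_ge_strict_antimono[OF assms] by (meson not_le)

lemma le_count_ge_iff:
  assumes "finite X" "1 \<le> i"
  shows "i \<le> count_ge X t \<longleftrightarrow> i \<le> card X \<and> t \<le> row_entry X i"
  by (metis assms count_ge_le_card count_ge_row_entry le_iff_count_ge_le le_trans row_entry_in)

lemma count_ge_eqI:
  assumes "finite X" "j = 0 \<or> (j \<le> card X \<and> t \<le> row_entry X j)"
    "j + 1 \<le> card X \<Longrightarrow> row_entry X (j + 1) < t"
  shows "count_ge X t = j"
  using assms le_count_ge_iff[OF assms(1), of j t] le_count_ge_iff[OF assms(1), of "j + 1" t]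
  by (cases "j = 0") auto

lemma count_ge_insert: "finite X \<Longrightarrow> x \<notin> X \<Longrightarrow> t \<le> x \<Longrightarrow> count_ge (insert x X) t = count_ge X t + 1"
proof -
  assume "finite X" "x \<notin> X" "t \<le> x"
  then have "{y \<in> insert x X. t \<le> y} = insert x {y \<in> X. t \<le> y}" "x \<notin> {y \<in> X. t \<le> y}" by auto
  then show ?thesis unfolding count_ge_def using \<open>finite X\<close> by simp
qed

lemma subset_eq_if_count_ge_Suc_eq:
  assumes "finite U" "X \<subseteq> U" "Y \<subseteq> U" "card X = card Y"
    and thresholds: "\<And>u. u \<in> U \<Longrightarrow> (\<forall>x\<in>U. u \<le> x) \<or> (\<exists>w\<in>T. \<forall>x\<in>U. u \<le> x \<longleftrightarrow> w < x)"
    and "\<And>w. w \<in> T \<Longrightarrow> count_ge X (Suc w) = count_ge Y (Suc w)"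
  shows "X = Y"
proof (rule subset_eq_if_count_ge_eq[OF assms(1-3)])
  fix u assume "u \<in> U"
  from thresholds[OF this] show "count_ge X u = count_ge Y u"
  proof
    assume "\<forall>x\<in>U. u \<le> x"
    then have "{x \<in> X. u \<le> x} = X" "{x \<in> Y. u \<le> x} = Y" using assms(2,3) by auto
    then show ?thesis using assms(4) unfolding count_ge_def by simp
  next
    assume "\<exists>w\<in>T. \<forall>x\<in>U. u \<le> x \<longleftrightarrow> w < x"
    then obtain w where "w \<in> T" "\<And>x. x \<in> U \<Longrightarrow> u \<le> x \<longleftrightarrow> Suc w \<le> x" by (auto simp: Suc_le_eq)
    then have "{x \<in> X. u \<le> x} = {x \<in> X. Suc w \<le> x}" "{x \<in> Y. u \<le> x} = {x \<in> Y. Suc w \<le> x}"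
      using assms(2,3) by auto
    then show ?thesis using assms(6)[OF \<open>w \<in> T\<close>] unfolding count_ge_def by simp
  qed
qed

lemma count_ge_swap_elsewhere:
  assumes "finite X" "y \<in> X" "x \<notin> X" "t \<le> x \<longleftrightarrow> t \<le> y"
  shows "count_ge (insert x (X - {y})) t = count_ge X t"
  using count_ge_swap[OF assms(1-3), of t] assms(4) by (auto split: if_splits)

lemma count_ge_swap_at_new:
  assumes "finite X" "y \<in> X" "x \<notin> X" "\<And>z. z \<in> X \<Longrightarrow> z \<noteq> y \<Longrightarrow> x \<le> z \<longleftrightarrow> y \<le> z"
  shows "count_ge (insert x (X - {y})) x = count_ge X y"
proof -
  have "{z \<in> insert x (X - {y}). x \<le> z} = insert x ({z \<in> X. y \<le> z} - {y})" using assms(4) by auto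
  moreover have "card (insert x ({z \<in> X. y \<le> z} - {y})) = card {z \<in> X. y \<le> z}"
    using assms(1-3) card_Suc_Diff1[of "{z \<in> X. y \<le> z}" y] by simp
  ultimately show ?thesis unfolding count_ge_def by simp
qed

lemma count_ge_swap_adjacent:
  assumes "finite X" "y \<in> X" "x \<notin> X" "\<And>z. z \<in> X \<Longrightarrow> z \<noteq> y \<Longrightarrow> z \<le> x \<longleftrightarrow> z \<le> y"
    and "z \<in> insert x (X - {y})"
  shows "count_ge (insert x (X - {y})) z = count_ge X (if z = x then y else z)"
proof (cases "z = x")
  case True
  have "x \<le> z' \<longleftrightarrow> y \<le> z'" if "z' \<in> X" "z' \<noteq> y" for z'
    using assms(4)[OF that] assms(3) that by (metis le_cases order_antisym)
  then show ?thesis using count_ge_swap_at_new[OF assms(1-3)] True by simp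
next
  case False
  then show ?thesis using count_ge_swap_elsewhere[OF assms(1-3)] assms(4,5) by auto
qed

lemma consecutive_ranks_le_iff:
  assumes "finite X" "x \<in> X" "y \<in> X" "z \<in> X" "count_ge X y = count_ge X x + 1" "z \<noteq> x"
  shows "z \<le> x \<longleftrightarrow> z \<le> y"
  using le_iff_count_ge_le[OF assms(1,2), of z] le_iff_count_ge_le[OF assms(1,3), of z]
    count_ge_inj[OF assms(1,4,2)] assms(5,6) by linarith

definition rank_successor :: "nat set \<Rightarrow> nat set \<Rightarrow> nat \<Rightarrow> nat" where
  "rank_successor X Y x = row_entry Y (count_ge X x + 1)"

lemma rank_successor:
  assumes "finite X" "finite Y" "card X < card Y" "x \<in> X"
  shows "rank_successor X Y x \<in> Y" "count_ge Y (rank_successor X Y x) = count_ge X x + 1"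
  using row_entry_in[OF assms(2)] count_ge_row_entry[OF assms(2)] count_ge_le_card[OF assms(1), of x] assms(3)
  unfolding rank_successor_def by simp_all

lemma inj_on_rank_successor:
  assumes "finite X" "finite Y" "card X < card Y"
  shows "inj_on (rank_successor X Y) X"
  using rank_successor[OF assms] count_ge_inj[OF assms(1)] by (intro inj_onI) (metis add_right_cancel)

lemma rank_successor_eqI:
  assumes "finite Y" "y \<in> Y" "count_ge Y y = count_ge X x + 1"
  shows "rank_successor X Y x = y"
  using row_entry_count_ge(3)[OF assms(1,2)] assms(3) unfolding rank_successor_def by simp

section \<open>The relation B^+ in terms of counts\<close>

lemma ext_entry_ge_iff:
  assumes "finite X" "1 \<le> i"
  shows "ereal (real t) \<le> ext_entry X i \<longleftrightarrow> i \<le> count_ge X t"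
  using le_count_ge_iff[OF assms, of t] assms by (simp add: ext_entry_def)

lemma ext_entry_gt_iff:
  assumes "finite X" "1 \<le> i"
  shows "ereal (real t) < ext_entry X i \<longleftrightarrow> i \<le> count_ge X (Suc t)"
  using le_count_ge_iff[OF assms, of "Suc t"] assms by (auto simp: ext_entry_def Suc_le_eq)

lemma ext_entry0_ge_iff:
  assumes "finite X" "1 \<le> i"
  shows "ereal (real t) \<le> ext_entry0 X (i - 1) \<longleftrightarrow> i - 1 \<le> count_ge X t"
  using ext_entry_ge_iff[OF assms(1), of "i - 1" t] by (cases "i = 1") (simp_all add: ext_entry0_def)

lemma ext_entry0_gt_iff:
  assumes "finite X" "1 \<le> i"
  shows "ereal (real t) < ext_entry0 X (i - 1) \<longleftrightarrow> i - 1 \<le> count_ge X (Suc t)"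
  using ext_entry_gt_iff[OF assms(1), of "i - 1" t] by (cases "i = 1") (simp_all add: ext_entry0_def)

lemma ext_entry_interlacing_iff:
  assumes "finite X" "1 \<le> i"
  shows "ereal (real t) \<le> ext_entry X i \<and> ext_entry X (i + 1) < ereal (real t) \<longleftrightarrow> count_ge X t = i"
    and "ereal (real t) < ext_entry X i \<and> ext_entry X (i + 1) \<le> ereal (real t) \<longleftrightarrow> count_ge X (Suc t) = i"
    and "ereal (real t) \<le> ext_entry0 X (i - 1) \<and> ext_entry0 X i < ereal (real t) \<longleftrightarrow> count_ge X t + 1 = i"
    and "ereal (real t) < ext_entry0 X (i - 1) \<and> ext_entry0 X i \<le> ereal (real t) \<longleftrightarrow> count_ge X (Suc t) + 1 = i"
proof -
  have "i + 1 \<ge> 1" "(i + 1) - 1 = i" by simp_all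
  note ge = ext_entry_ge_iff[OF assms(1)] and gt = ext_entry_gt_iff[OF assms(1)]
    and ge0 = ext_entry0_ge_iff[OF assms(1)] and gt0 = ext_entry0_gt_iff[OF assms(1)]
  show "ereal (real t) \<le> ext_entry X i \<and> ext_entry X (i + 1) < ereal (real t) \<longleftrightarrow> count_ge X t = i"
    unfolding not_le[symmetric] ge[OF assms(2)] ge[OF \<open>i + 1 \<ge> 1\<close>] by linarith
  show "ereal (real t) < ext_entry X i \<and> ext_entry X (i + 1) \<le> ereal (real t) \<longleftrightarrow> count_ge X (Suc t) = i"
    unfolding not_less[symmetric] gt[OF assms(2)] gt[OF \<open>i + 1 \<ge> 1\<close>] by linarith
  show "ereal (real t) \<le> ext_entry0 X (i - 1) \<and> ext_entry0 X i < ereal (real t) \<longleftrightarrow> count_ge X t + 1 = i"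
    using ge0[OF assms(2), of t] ge0[OF \<open>i + 1 \<ge> 1\<close>, of t] assms(2)
    unfolding not_le[symmetric] \<open>(i + 1) - 1 = i\<close> by linarith
  show "ereal (real t) < ext_entry0 X (i - 1) \<and> ext_entry0 X i \<le> ereal (real t) \<longleftrightarrow> count_ge X (Suc t) + 1 = i"
    using gt0[OF assms(2), of t] gt0[OF \<open>i + 1 \<ge> 1\<close>, of t] assms(2)
    unfolding not_less[symmetric] \<open>(i + 1) - 1 = i\<close> by linarith
qed

lemma all_row_entries_iff:
  assumes "finite X" "\<And>i. 1 \<le> i \<Longrightarrow> i \<le> card X \<Longrightarrow> Q i \<longleftrightarrow> P i (row_entry X i)"
  shows "(\<forall>i. 1 \<le> i \<and> i \<le> card X \<longrightarrow> Q i) \<longleftrightarrow> (\<forall>x\<in>X. P (count_ge X x) x)"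
proof
  assume "\<forall>i. 1 \<le> i \<and> i \<le> card X \<longrightarrow> Q i"
  then show "\<forall>x\<in>X. P (count_ge X x) x" using assms(2) row_entry_count_ge[OF assms(1)] by metis
next
  assume "\<forall>x\<in>X. P (count_ge X x) x"
  then show "\<forall>i. 1 \<le> i \<and> i \<le> card X \<longrightarrow> Q i"
    using assms(2) count_ge_row_entry[OF assms(1)] row_entry_in[OF assms(1)] by metis
qed

lemma Bplus_iff:
  assumes "finite (fst L)" "finite (snd L)" "finite (fst L')" "finite (snd L')"
  shows "(L, L') \<in> Bplus Z Z' \<longleftrightarrow> L \<in> Sbar Z \<and> L' \<in> Sbar Z' \<and> defect L' = 1 - defect L \<and>
    (card (fst Z') = card (snd Z) \<longrightarrow>
       (\<forall>x\<in>snd L'. count_ge (fst L) (Suc x) = count_ge (snd L') x) \<and>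
       (\<forall>x\<in>fst L'. count_ge (snd L) (Suc x) + 1 = count_ge (fst L') x)) \<and>
    (card (fst Z') = card (snd Z) + 1 \<longrightarrow>
       (\<forall>x\<in>snd L'. count_ge (fst L) x = count_ge (snd L') x) \<and>
       (\<forall>x\<in>fst L'. count_ge (snd L) x + 1 = count_ge (fst L') x))"
proof -
  have entry: "ext_entry X i = ereal (real (row_entry X i))" if "1 \<le> i" "i \<le> card X" for X i
    using that by (simp add: ext_entry_def)
  note interlacing = ext_entry_interlacing_iff[OF assms(1)] ext_entry_interlacing_iff[OF assms(2)]
  have "(\<forall>i. 1 \<le> i \<and> i \<le> card (snd L') \<longrightarrow>
           ext_entry (fst L) i \<ge> ext_entry (snd L') i \<and> ext_entry (snd L') i > ext_entry (fst L) (i + 1))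
      \<longleftrightarrow> (\<forall>x\<in>snd L'. count_ge (fst L) x = count_ge (snd L') x)"
    and "(\<forall>i. 1 \<le> i \<and> i \<le> card (snd L') \<longrightarrow>
           ext_entry (fst L) i > ext_entry (snd L') i \<and> ext_entry (snd L') i \<ge> ext_entry (fst L) (i + 1))
      \<longleftrightarrow> (\<forall>x\<in>snd L'. count_ge (fst L) (Suc x) = count_ge (snd L') x)"
    by (rule all_row_entries_iff[OF assms(4)]; simp only: entry interlacing)+
  moreover have "(\<forall>i. 1 \<le> i \<and> i \<le> card (fst L') \<longrightarrow>
           ext_entry0 (snd L) (i - 1) \<ge> ext_entry (fst L') i \<and> ext_entry (fst L') i > ext_entry0 (snd L) i)
      \<longleftrightarrow> (\<forall>x\<in>fst L'. count_ge (snd L) x + 1 = count_ge (fst L') x)"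
    and "(\<forall>i. 1 \<le> i \<and> i \<le> card (fst L') \<longrightarrow>
           ext_entry0 (snd L) (i - 1) > ext_entry (fst L') i \<and> ext_entry (fst L') i \<ge> ext_entry0 (snd L) i)
      \<longleftrightarrow> (\<forall>x\<in>fst L'. count_ge (snd L) (Suc x) + 1 = count_ge (fst L') x)"
    by (rule all_row_entries_iff[OF assms(3)]; simp only: entry interlacing)+
  ultimately show ?thesis unfolding Bplus_def Let_def mem_Collect_eq prod.case by blast
qed

section \<open>Moving entries between the rows\<close>

lemma move_in_Sbar: "M \<subseteq> singles Z \<Longrightarrow> move Z M \<in> Sbar Z"
  by (auto simp: Sbar_def)

lemma self_in_Sbar: "Z \<in> Sbar Z"
  using move_in_Sbar[of "{}" Z] by (simp add: move_def)

lemma singles_regular: "regular Z \<Longrightarrow> singles Z = fst Z \<union> snd Z"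
  by (auto simp: singles_def regular_def)

lemma move_Un: "fst (move Z M) \<union> snd (move Z M) = fst Z \<union> snd Z"
  by (auto simp: move_def)

lemma move_disjoint: "regular Z \<Longrightarrow> fst (move Z M) \<inter> snd (move Z M) = {}"
  by (auto simp: move_def regular_def)

lemma Sbar_Un_disjoint:
  assumes "regular Z" "L \<in> Sbar Z"
  shows "fst L \<union> snd L = fst Z \<union> snd Z" "fst L \<inter> snd L = {}"
  using assms move_Un[of Z] move_disjoint[of Z] by (auto simp: Sbar_def)

lemma Sbar_eq_iff_fst:
  assumes "regular Z" "L \<in> Sbar Z" "L' \<in> Sbar Z"
  shows "L = L' \<longleftrightarrow> fst L = fst L'"
  using Sbar_Un_disjoint[OF assms(1,2)] Sbar_Un_disjoint[OF assms(1,3)] unfolding prod_eq_iff by blast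

lemma Sbar_eq_iff_snd:
  assumes "regular Z" "L \<in> Sbar Z" "L' \<in> Sbar Z"
  shows "L = L' \<longleftrightarrow> snd L = snd L'"
  using Sbar_Un_disjoint[OF assms(1,2)] Sbar_Un_disjoint[OF assms(1,3)] unfolding prod_eq_iff by blast

lemma move_pair:
  assumes "regular Z" "x \<in> fst Z" "y \<in> snd Z"
  shows "move Z {x, y} = (insert y (fst Z - {x}), insert x (snd Z - {y}))"
  using assms by (auto simp: move_def regular_def)

text \<open>Moving entries commutes with an injective relabelling that exchanges the two rows and adjoins
  one new entry to the top row; this is the identity behind the maps written theta^+ in the paper.\<close>
lemma move_relabel:
  assumes "inj_on f (fst Y \<union> snd Y)" "N \<subseteq> fst Y \<union> snd Y" "x \<notin> f ` N"
  shows "move (insert x (f ` snd Y), f ` fst Y) (f ` N) = (insert x (f ` snd (move Y N)), f ` fst (move Y N))"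
proof -
  have "f ` (P - N) = f ` P - f ` N" "f ` (P \<inter> N) = f ` P \<inter> f ` N" if "P \<subseteq> fst Y \<union> snd Y" for P
    using inj_on_image_set_diff[OF assms(1), of P N] inj_on_image_Int[OF assms(1) that assms(2)] that assms(2)
    by auto
  then show ?thesis using assms(3) by (auto simp: move_def image_Un)
qed

lemma Bplus_if_D_Z: "D_Z Z Z' = {Z'} \<Longrightarrow> (Z, Z') \<in> Bplus Z Z'"
  and Bplus_if_D_Z': "D_Z' Z Z' = {Z} \<Longrightarrow> (Z, Z') \<in> Bplus Z Z'"
  by (auto simp: D_Z_def D_Z'_def Dset_def)

section \<open>Ranks of the entries of a regular special pair\<close>

locale regular_special_pair =
  fixes Z Z' :: symbol
  assumes special_Z: "special1 Z" and special_Z': "special0 Z'"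
    and regular_Z: "regular Z" and regular_Z': "regular Z'"
begin

abbreviation "A0 \<equiv> fst Z"
abbreviation "B0 \<equiv> snd Z"
abbreviation "C0 \<equiv> fst Z'"
abbreviation "D0 \<equiv> snd Z'"
abbreviation "U \<equiv> A0 \<union> B0"
abbreviation "W \<equiv> C0 \<union> D0"
abbreviation "m \<equiv> card B0"
abbreviation "m' \<equiv> card C0"
abbreviation "a \<equiv> row_entry A0"
abbreviation "b \<equiv> row_entry B0"
abbreviation "c \<equiv> row_entry C0"
abbreviation "d \<equiv> row_entry D0"

lemma finite_A0: "finite A0" and finite_B0: "finite B0" and card_A0: "card A0 = m + 1"
  using special_Z by (auto simp: special1_def is_symbol_def)

lemma finite_C0: "finite C0" and finite_D0: "finite D0" and card_D0: "card D0 = m'"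
  using special_Z' by (auto simp: special0_def is_symbol_def)

lemma finite_U: "finite U" and finite_W: "finite W"
  using finite_A0 finite_B0 finite_C0 finite_D0 by auto

lemma disjoint_AB: "A0 \<inter> B0 = {}" and disjoint_CD: "C0 \<inter> D0 = {}"
  using regular_Z regular_Z' by (simp_all add: regular_def)

lemma card_U: "card U = 2 * m + 1" and card_W: "card W = 2 * m'"
  using card_Un_disjoint[OF finite_A0 finite_B0 disjoint_AB] card_Un_disjoint[OF finite_C0 finite_D0 disjoint_CD]
    card_A0 card_D0 by simp_all

lemma count_ge_U: "count_ge U t = count_ge A0 t + count_ge B0 t"
  and count_ge_W: "count_ge W t = count_ge C0 t + count_ge D0 t"
  using count_ge_Un_disjoint[OF finite_A0 finite_B0 disjoint_AB]
    count_ge_Un_disjoint[OF finite_C0 finite_D0 disjoint_CD] by simp_all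

lemma a_in: "1 \<le> i \<Longrightarrow> i \<le> m + 1 \<Longrightarrow> a i \<in> A0"
  and b_in: "1 \<le> i \<Longrightarrow> i \<le> m \<Longrightarrow> b i \<in> B0"
  and c_in: "1 \<le> i \<Longrightarrow> i \<le> m' \<Longrightarrow> c i \<in> C0"
  and d_in: "1 \<le> i \<Longrightarrow> i \<le> m' \<Longrightarrow> d i \<in> D0"
  using row_entry_in[OF finite_A0] row_entry_in[OF finite_B0] row_entry_in[OF finite_C0]
    row_entry_in[OF finite_D0] card_A0 card_D0 by simp_all

lemma count_ge_a: "1 \<le> i \<Longrightarrow> i \<le> m + 1 \<Longrightarrow> count_ge A0 (a i) = i"
  and count_ge_b: "1 \<le> i \<Longrightarrow> i \<le> m \<Longrightarrow> count_ge B0 (b i) = i"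
  and count_ge_c: "1 \<le> i \<Longrightarrow> i \<le> m' \<Longrightarrow> count_ge C0 (c i) = i"
  and count_ge_d: "1 \<le> i \<Longrightarrow> i \<le> m' \<Longrightarrow> count_ge D0 (d i) = i"
  using count_ge_row_entry[OF finite_A0] count_ge_row_entry[OF finite_B0] count_ge_row_entry[OF finite_C0]
    count_ge_row_entry[OF finite_D0] card_A0 card_D0 by simp_all

lemma obtain_a:
  assumes "x \<in> A0" obtains i where "1 \<le> i" "i \<le> m + 1" "x = a i"
  using row_entry_count_ge[OF finite_A0 assms] card_A0 by metis

lemma obtain_b:
  assumes "x \<in> B0" obtains i where "1 \<le> i" "i \<le> m" "x = b i"
  using row_entry_count_ge[OF finite_B0 assms] by metis

lemma obtain_c:
  assumes "x \<in> C0" obtains i where "1 \<le> i" "i \<le> m'" "x = c i"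
  using row_entry_count_ge[OF finite_C0 assms] by metis

lemma obtain_d:
  assumes "x \<in> D0" obtains i where "1 \<le> i" "i \<le> m'" "x = d i"
  using row_entry_count_ge[OF finite_D0 assms] card_D0 by metis

text \<open>Regularity makes the interlacing of the rows of a special symbol strict.\<close>
lemma b_less_a: "1 \<le> i \<Longrightarrow> i \<le> m \<Longrightarrow> b i < a i"
  and a_less_b: "1 \<le> i \<Longrightarrow> i \<le> m \<Longrightarrow> a (i + 1) < b i"
  and d_less_c: "1 \<le> i \<Longrightarrow> i \<le> m' \<Longrightarrow> d i < c i"
  and c_less_d: "1 \<le> i \<Longrightarrow> i < m' \<Longrightarrow> c (i + 1) < d i"
proof -
  show "b i < a i" if "1 \<le> i" "i \<le> m"
  proof -
    have "b i \<le> a i" using special_Z that by (simp add: special1_def)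
    moreover have "b i \<noteq> a i" using a_in[of i] b_in[of i] disjoint_AB that by auto
    ultimately show ?thesis by simp
  qed
  show "a (i + 1) < b i" if "1 \<le> i" "i \<le> m"
  proof -
    have "a (i + 1) \<le> b i" using special_Z that by (simp add: special1_def)
    moreover have "a (i + 1) \<noteq> b i" using a_in[of "i + 1"] b_in[of i] disjoint_AB that by auto
    ultimately show ?thesis by simp
  qed
  show "d i < c i" if "1 \<le> i" "i \<le> m'"
  proof -
    have "d i \<le> c i" using special_Z' that by (simp add: special0_def)
    moreover have "d i \<noteq> c i" using c_in[of i] d_in[of i] disjoint_CD that by auto
    ultimately show ?thesis by simp
  qed
  show "c (i + 1) < d i" if "1 \<le> i" "i < m'"
  proof -
    have "c (i + 1) \<le> d i" using special_Z' that by (simp add: special0_def)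
    moreover have "c (i + 1) \<noteq> d i" using c_in[of "i + 1"] d_in[of i] disjoint_CD that by auto
    ultimately show ?thesis by simp
  qed
qed


lemma count_ge_B0_a: "1 \<le> i \<Longrightarrow> i \<le> m + 1 \<Longrightarrow> count_ge B0 (a i) = i - 1"
proof (rule count_ge_eqI[OF finite_B0])
  assume i: "1 \<le> i" "i \<le> m + 1"
  show "i - 1 = 0 \<or> i - 1 \<le> m \<and> a i \<le> b (i - 1)"
  proof (cases "i = 1")
    case False
    then have "a (i - 1 + 1) < b (i - 1)" using a_less_b[of "i - 1"] i by simp
    then show ?thesis using False i by simp
  qed simp
  show "b (i - 1 + 1) < a i" if "i - 1 + 1 \<le> m" using b_less_a[of i] i that by simp
qed

lemma count_ge_A0_b: "1 \<le> i \<Longrightarrow> i \<le> m \<Longrightarrow> count_ge A0 (b i) = i"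
proof (rule count_ge_eqI[OF finite_A0])
  assume i: "1 \<le> i" "i \<le> m"
  show "i = 0 \<or> i \<le> card A0 \<and> b i \<le> a i" using b_less_a[OF i] i card_A0 by simp
  show "a (i + 1) < b i" using a_less_b[OF i] .
qed

lemma count_ge_D0_c: "1 \<le> i \<Longrightarrow> i \<le> m' \<Longrightarrow> count_ge D0 (c i) = i - 1"
proof (rule count_ge_eqI[OF finite_D0])
  assume i: "1 \<le> i" "i \<le> m'"
  show "i - 1 = 0 \<or> i - 1 \<le> card D0 \<and> c i \<le> d (i - 1)"
  proof (cases "i = 1")
    case False
    then have "c (i - 1 + 1) < d (i - 1)" using c_less_d[of "i - 1"] i by simp
    then show ?thesis using False i card_D0 by simp
  qed simp
  show "d (i - 1 + 1) < c i" using d_less_c[OF i] i by simp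
qed

lemma count_ge_C0_d: "1 \<le> i \<Longrightarrow> i \<le> m' \<Longrightarrow> count_ge C0 (d i) = i"
proof (rule count_ge_eqI[OF finite_C0])
  assume i: "1 \<le> i" "i \<le> m'"
  show "i = 0 \<or> i \<le> m' \<and> d i \<le> c i" using d_less_c[OF i] i by simp
  show "c (i + 1) < d i" if "i + 1 \<le> m'" using c_less_d[of i] i that by simp
qed

lemma count_ge_U_a: "1 \<le> i \<Longrightarrow> i \<le> m + 1 \<Longrightarrow> count_ge U (a i) = 2 * i - 1"
  and count_ge_U_b: "1 \<le> i \<Longrightarrow> i \<le> m \<Longrightarrow> count_ge U (b i) = 2 * i"
  and count_ge_W_c: "1 \<le> i \<Longrightarrow> i \<le> m' \<Longrightarrow> count_ge W (c i) = 2 * i - 1"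
  and count_ge_W_d: "1 \<le> i \<Longrightarrow> i \<le> m' \<Longrightarrow> count_ge W (d i) = 2 * i"
  by (simp_all add: count_ge_U count_ge_W count_ge_a count_ge_b count_ge_c count_ge_d
      count_ge_B0_a count_ge_A0_b count_ge_D0_c count_ge_C0_d)

lemma defect_Z: "defect Z = 1" and defect_Z': "defect Z' = 0"
  using card_A0 card_D0 by (simp_all add: defect_def)

lemma in_D_Z:
  assumes "(Z, L') \<in> Bplus Z Z'" "defect L' = 0"
  shows "L' \<in> D_Z Z Z'"
  using assms self_in_Sbar defect_Z by (auto simp: D_Z_def Dset_def Sdef_def Bplus_def)

lemma in_D_Z':
  assumes "(L, Z') \<in> Bplus Z Z'" "defect L = 1"
  shows "L \<in> D_Z' Z Z'"
  using assms self_in_Sbar defect_Z' by (auto simp: D_Z'_def Dset_def Sdef_def Bplus_def)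

section \<open>Interlacing forced by a one-to-one D_{Z,Z'}\<close>

lemma Bplus_self_plus:
  assumes "m' = m + 1" "(Z, Z') \<in> Bplus Z Z'"
  shows "x \<in> D0 \<Longrightarrow> count_ge A0 x = count_ge D0 x" and "x \<in> C0 \<Longrightarrow> count_ge B0 x + 1 = count_ge C0 x"
  using Bplus_iff[of Z Z' Z Z'] assms finite_A0 finite_B0 finite_C0 finite_D0 by auto

lemma Bplus_self_zero:
  assumes "m' = m" "(Z, Z') \<in> Bplus Z Z'"
  shows "x \<in> D0 \<Longrightarrow> count_ge A0 (Suc x) = count_ge D0 x"
    and "x \<in> C0 \<Longrightarrow> count_ge B0 (Suc x) + 1 = count_ge C0 x"
  using Bplus_iff[of Z Z' Z Z'] assms finite_A0 finite_B0 finite_C0 finite_D0 by auto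

text \<open>The shift s = 0 serves the case m' = m + 1, where B^+ compares entries by \<open>\<ge>\<close>, and s = 1 the
  case m' = m, where it compares them by \<open>>\<close>.\<close>
lemma interlacing_count_bounds:
  assumes A0_d: "\<And>i. 1 \<le> i \<Longrightarrow> i \<le> k \<Longrightarrow> count_ge A0 (d i + s) = i"
    and B0_c: "\<And>i. 1 \<le> i \<Longrightarrow> i \<le> k \<Longrightarrow> count_ge B0 (c i + s) + 1 = i"
    and "k \<le> m'" "k \<le> m + 1" and i: "1 \<le> i" "i \<le> k"
  shows "count_ge A0 (c i + s) \<le> i" "i \<le> count_ge A0 (c i + s) + 1"
    and "i \<le> count_ge B0 (d i + s) + 1" "count_ge B0 (d i + s) \<le> i"
proof -
  have "d i < c i" using d_less_c i assms(3) by simp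
  then show "count_ge A0 (c i + s) \<le> i" "i \<le> count_ge B0 (d i + s) + 1"
    using count_ge_antimono[OF finite_A0, of "d i + s" "c i + s"]
      count_ge_antimono[OF finite_B0, of "d i + s" "c i + s"]
      A0_d[OF i] B0_c[OF i] by simp_all
  show "i \<le> count_ge A0 (c i + s) + 1"
  proof (cases "i = 1")
    case False
    then have i1: "1 \<le> i - 1" and "i - 1 \<le> m" using i assms(4) by simp_all
    have "count_ge B0 (c i + s) = i - 1" using B0_c[OF i] by simp
    then have "c i + s \<le> b (i - 1)" using le_count_ge_iff[OF finite_B0 i1, of "c i + s"] by simp
    then have "i - 1 \<le> count_ge A0 (c i + s)"
      using le_count_ge_iff[OF finite_A0 i1, of "c i + s"] b_less_a[OF i1 \<open>i - 1 \<le> m\<close>] \<open>i - 1 \<le> m\<close> card_A0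
      by simp
    then show ?thesis by simp
  qed simp
  show "count_ge B0 (d i + s) \<le> i"
  proof (rule ccontr)
    assume "\<not> count_ge B0 (d i + s) \<le> i"
    then have "i + 1 \<le> m" "d i + s \<le> b (i + 1)" using le_count_ge_iff[OF finite_B0, of "i + 1" "d i + s"] by auto
    then have "i + 1 \<le> count_ge A0 (d i + s)"
      using le_count_ge_iff[OF finite_A0, of "i + 1" "d i + s"] b_less_a[of "i + 1"] card_A0 by simp
    then show False using A0_d[OF i] by simp
  qed
qed

lemma entry_counts_plus:
  assumes card: "m' = m + 1" and "D_Z Z Z' = {Z'}" and i: "1 \<le> i" "i \<le> m + 1"
  shows "count_ge A0 (d i) = i" "count_ge B0 (c i) + 1 = i"
    and "count_ge A0 (c i) \<le> i" "i \<le> count_ge A0 (c i) + 1"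
    and "i \<le> count_ge B0 (d i) + 1" "count_ge B0 (d i) \<le> i"
proof -
  note self = Bplus_self_plus[OF card Bplus_if_D_Z[OF assms(2)]]
  have A0_d: "count_ge A0 (d j) = j" and B0_c: "count_ge B0 (c j) + 1 = j" if "1 \<le> j" "j \<le> m + 1" for j
    using self c_in d_in count_ge_c count_ge_d that card by simp_all
  show "count_ge A0 (d i) = i" "count_ge B0 (c i) + 1 = i" using A0_d[OF i] B0_c[OF i] .
  show "count_ge A0 (c i) \<le> i" "i \<le> count_ge A0 (c i) + 1" "i \<le> count_ge B0 (d i) + 1" "count_ge B0 (d i) \<le> i"
    using interlacing_count_bounds[of "m + 1" 0, OF _ _ _ _ i] A0_d B0_c card by simp_all
qed

lemma entry_counts_zero:
  assumes card: "m' = m" and "D_Z' Z Z' = {Z}" and i: "1 \<le> i" "i \<le> m"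
  shows "count_ge A0 (Suc (d i)) = i" "count_ge B0 (Suc (c i)) + 1 = i"
    and "count_ge A0 (Suc (c i)) \<le> i" "i \<le> count_ge A0 (Suc (c i)) + 1"
    and "i \<le> count_ge B0 (Suc (d i)) + 1" "count_ge B0 (Suc (d i)) \<le> i"
proof -
  note self = Bplus_self_zero[OF card Bplus_if_D_Z'[OF assms(2)]]
  have A0_d: "count_ge A0 (Suc (d j)) = j" and B0_c: "count_ge B0 (Suc (c j)) + 1 = j" if "1 \<le> j" "j \<le> m" for j
    using self c_in d_in count_ge_c count_ge_d that card by simp_all
  show "count_ge A0 (Suc (d i)) = i" "count_ge B0 (Suc (c i)) + 1 = i" using A0_d[OF i] B0_c[OF i] .
  show "count_ge A0 (Suc (c i)) \<le> i" "i \<le> count_ge A0 (Suc (c i)) + 1"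
    "i \<le> count_ge B0 (Suc (d i)) + 1" "count_ge B0 (Suc (d i)) \<le> i"
    using interlacing_count_bounds[of m 1, OF _ _ _ _ i] A0_d B0_c card by simp_all
qed

text \<open>Exchanging two entries of Z' that are adjacent in W changes no count except at the two
  exchanged entries; if the conditions of B^+ survive there, the result is a second element of D_Z.\<close>
lemma adjacent_swap_not_in_D_Z:
  assumes card: "m' = m + 1" and one_to_one: "D_Z Z Z' = {Z'}" and x: "x \<in> C0" and y: "y \<in> D0"
    and adjacent: "\<And>w. w \<in> W \<Longrightarrow> w \<noteq> x \<Longrightarrow> w \<noteq> y \<Longrightarrow> w \<le> x \<longleftrightarrow> w \<le> y"
    and at_x: "count_ge A0 x = count_ge D0 y" and at_y: "count_ge B0 y + 1 = count_ge C0 x"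
  shows False
proof -
  define C where "C = insert y (C0 - {x})"
  define D where "D = insert x (D0 - {y})"
  have "x \<notin> D0" "y \<notin> C0" using x y disjoint_CD by auto
  have "finite C" "finite D" using finite_C0 finite_D0 unfolding C_def D_def by auto
  have "(C, D) = move Z' {x, y}" unfolding C_def D_def using move_pair[OF regular_Z' x y] ..
  also have "\<dots> \<in> Sbar Z'" using x y singles_regular[OF regular_Z'] by (intro move_in_Sbar) auto
  finally have "(C, D) \<in> Sbar Z'" .
  have "defect (C, D) = 0"
    using \<open>x \<notin> D0\<close> \<open>y \<notin> C0\<close> x y finite_C0 finite_D0 card_D0 unfolding C_def D_def
    by (simp add: defect_def card_Suc_Diff1)
  have adjacent_rows: "z \<le> x \<longleftrightarrow> z \<le> y" if "z \<in> D0 \<and> z \<noteq> y \<or> z \<in> C0 \<and> z \<noteq> x" for z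
    using adjacent[of z] that \<open>x \<notin> D0\<close> \<open>y \<notin> C0\<close> by blast
  then have "count_ge D w = count_ge D0 (if w = x then y else w)" if "w \<in> D" for w
    using count_ge_swap_adjacent[OF finite_D0 y \<open>x \<notin> D0\<close>] that unfolding D_def by blast
  then have "\<forall>w\<in>D. count_ge A0 w = count_ge D w"
    using Bplus_self_plus(1)[OF card Bplus_if_D_Z[OF one_to_one]] at_x unfolding D_def by auto
  moreover have "count_ge C w = count_ge C0 (if w = y then x else w)" if "w \<in> C" for w
    using count_ge_swap_adjacent[OF finite_C0 x \<open>y \<notin> C0\<close>] adjacent_rows
      that unfolding C_def by blast
  then have "\<forall>w\<in>C. count_ge B0 w + 1 = count_ge C w"
    using Bplus_self_plus(2)[OF card Bplus_if_D_Z[OF one_to_one]] at_y unfolding C_def by auto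
  ultimately have "(Z, (C, D)) \<in> Bplus Z Z'"
    using Bplus_iff[of Z "(C, D)" Z Z'] \<open>finite C\<close> \<open>finite D\<close> finite_A0 finite_B0 self_in_Sbar
      \<open>(C, D) \<in> Sbar Z'\<close> \<open>defect (C, D) = 0\<close> defect_Z card by auto
  then have "(C, D) = Z'" using in_D_Z \<open>defect (C, D) = 0\<close> one_to_one by auto
  then have "y \<in> C0" unfolding C_def by (metis fst_conv insertI1)
  then show False using \<open>y \<notin> C0\<close> by contradiction
qed

lemma separated_swap_not_in_D_Z':
  assumes card: "m' = m" and one_to_one: "D_Z' Z Z' = {Z}" and x: "x \<in> A0" and y: "y \<in> B0"
    and separated: "\<And>w. w \<in> W \<Longrightarrow> w < x \<longleftrightarrow> w < y"
  shows False
proof -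
  define A where "A = insert y (A0 - {x})"
  define B where "B = insert x (B0 - {y})"
  have "x \<notin> B0" "y \<notin> A0" using x y disjoint_AB by auto
  have "finite A" "finite B" using finite_A0 finite_B0 unfolding A_def B_def by auto
  have "(A, B) = move Z {x, y}" unfolding A_def B_def using move_pair[OF regular_Z x y] ..
  also have "\<dots> \<in> Sbar Z" using x y singles_regular[OF regular_Z] by (intro move_in_Sbar) auto
  finally have "(A, B) \<in> Sbar Z" .
  have "defect (A, B) = 1"
    using \<open>x \<notin> B0\<close> \<open>y \<notin> A0\<close> x y finite_A0 finite_B0 card_A0 card_gt_0_iff[of B0] unfolding A_def B_def
    by (auto simp: defect_def card_Suc_Diff1)
  have "count_ge A (Suc w) = count_ge A0 (Suc w)" "count_ge B (Suc w) = count_ge B0 (Suc w)" if "w \<in> W" for w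
    using count_ge_swap_elsewhere[OF finite_A0 x \<open>y \<notin> A0\<close>, of "Suc w"]
      count_ge_swap_elsewhere[OF finite_B0 y \<open>x \<notin> B0\<close>, of "Suc w"] separated[OF that]
    unfolding A_def B_def by (auto simp: Suc_le_eq)
  then have "((A, B), Z') \<in> Bplus Z Z'"
    using Bplus_iff[of "(A, B)" Z' Z Z'] Bplus_self_zero[OF card Bplus_if_D_Z'[OF one_to_one]]
      \<open>finite A\<close> \<open>finite B\<close> finite_C0 finite_D0 self_in_Sbar \<open>(A, B) \<in> Sbar Z\<close> \<open>defect (A, B) = 1\<close>
      defect_Z' card by auto
  then have "(A, B) = Z" using in_D_Z' \<open>defect (A, B) = 1\<close> one_to_one by auto
  then have "y \<in> A0" unfolding A_def by (metis fst_conv insertI1)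
  then show False using \<open>y \<notin> A0\<close> by contradiction
qed

lemma no_swap_c_d:
  assumes card: "m' = m + 1" and one_to_one: "D_Z Z Z' = {Z'}" and i: "1 \<le> i" "i \<le> m + 1"
  shows "\<not> (count_ge A0 (c i) = i \<and> count_ge B0 (d i) + 1 = i)"
proof
  assume swap: "count_ge A0 (c i) = i \<and> count_ge B0 (d i) + 1 = i"
  have x: "c i \<in> C0" and y: "d i \<in> D0" using c_in d_in i card by auto
  have "count_ge W (d i) = count_ge W (c i) + 1" using count_ge_W_c count_ge_W_d i card by simp
  then have adjacent: "w \<le> c i \<longleftrightarrow> w \<le> d i" if "w \<in> W" "w \<noteq> c i" for w
    using consecutive_ranks_le_iff[OF finite_W _ _ that(1)] x y that(2) by blast
  show False
  proof (rule adjacent_swap_not_in_D_Z[OF card one_to_one x y])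
    show "count_ge A0 (c i) = count_ge D0 (d i)" using swap count_ge_d[of i] i card by simp
    show "count_ge B0 (d i) + 1 = count_ge C0 (c i)" using swap count_ge_c[of i] i card by simp
  qed (use adjacent in blast)
qed

lemma no_swap_d_c:
  assumes card: "m' = m + 1" and one_to_one: "D_Z Z Z' = {Z'}" and i: "1 \<le> i" "i \<le> m"
  shows "\<not> (count_ge A0 (c (i + 1)) = i \<and> count_ge B0 (d i) = i)"
proof
  assume swap: "count_ge A0 (c (i + 1)) = i \<and> count_ge B0 (d i) = i"
  have x: "c (i + 1) \<in> C0" and y: "d i \<in> D0" using c_in d_in i card by auto
  have "count_ge W (c (i + 1)) = count_ge W (d i) + 1" using count_ge_W_c[of "i + 1"] count_ge_W_d[of i] i card by simp
  then have adjacent: "w \<le> d i \<longleftrightarrow> w \<le> c (i + 1)" if "w \<in> W" "w \<noteq> d i" for w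
    using consecutive_ranks_le_iff[OF finite_W _ _ that(1)] x y that(2) by blast
  show False
  proof (rule adjacent_swap_not_in_D_Z[OF card one_to_one x y])
    show "count_ge A0 (c (i + 1)) = count_ge D0 (d i)" using swap count_ge_d[of i] i card by simp
    show "count_ge B0 (d i) + 1 = count_ge C0 (c (i + 1))" using swap count_ge_c[of "i + 1"] i card by simp
  qed (use adjacent in blast)
qed

text \<open>The bounds of entry_counts_plus leave two values for each count; the two kinds of adjacent
  swaps exclude the wrong ones, inductively from the least entry d_(m+1) of Z' upwards.\<close>
lemma interlaced_plus:
  assumes card: "m' = m + 1" and one_to_one: "D_Z Z Z' = {Z'}" and "w \<in> W"
  shows "count_ge U w + 1 = count_ge W w"
proof -
  note counts = entry_counts_plus[OF card one_to_one]
  have B0_d: "count_ge B0 (d i) + 1 = i" if "1 \<le> i" "i \<le> m + 1" for i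
    using that(2)
  proof (induction i rule: inc_induct)
    case base
    show ?case using counts(5)[of "m + 1"] count_ge_le_card[OF finite_B0, of "d (m + 1)"] by simp
  next
    case (step n)
    then have "count_ge A0 (c (Suc n)) + 1 = Suc n"
      using no_swap_c_d[OF card one_to_one, of "Suc n"] counts(3,4)[of "Suc n"] by fastforce
    then show ?case using no_swap_d_c[OF card one_to_one, of n] counts(5,6)[of n] step that(1) by fastforce
  qed
  have A0_c: "count_ge A0 (c i) + 1 = i" if "1 \<le> i" "i \<le> m + 1" for i
  proof -
    have "count_ge A0 (c i) \<noteq> i" using no_swap_c_d[OF card one_to_one that] B0_d[OF that] by blast
    then show ?thesis using counts(3,4)[OF that] by linarith
  qed
  show ?thesis
  proof (cases "w \<in> C0")
    case True
    then obtain i where i: "1 \<le> i" "i \<le> m'" "w = c i" by (rule obtain_c)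
    then show ?thesis using A0_c[of i] counts(2)[of i] count_ge_W_c[of i] count_ge_U[of w] card by simp
  next
    case False
    then have "w \<in> D0" using \<open>w \<in> W\<close> by simp
    then obtain i where i: "1 \<le> i" "i \<le> m'" "w = d i" by (rule obtain_d)
    then show ?thesis using B0_d[of i] counts(1)[of i] count_ge_W_d[of i] count_ge_U[of w] card by simp
  qed
qed

lemma below_a_iff: "1 \<le> k \<Longrightarrow> k \<le> m + 1 \<Longrightarrow> w < a k \<longleftrightarrow> k \<le> count_ge A0 (Suc w)"
  and below_b_iff: "1 \<le> k \<Longrightarrow> k \<le> m \<Longrightarrow> w < b k \<longleftrightarrow> k \<le> count_ge B0 (Suc w)"
  using le_count_ge_iff[OF finite_A0, of k "Suc w"] le_count_ge_iff[OF finite_B0, of k "Suc w"] card_A0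
  by (auto simp: Suc_le_eq)

lemma W_cases:
  assumes "w \<in> W" "\<And>j. 1 \<le> j \<Longrightarrow> j \<le> m' \<Longrightarrow> P (c j)" "\<And>j. 1 \<le> j \<Longrightarrow> j \<le> m' \<Longrightarrow> P (d j)"
  shows "P w"
  using assms by (auto elim: obtain_c obtain_d)

lemma no_swap_a_b:
  assumes card: "m' = m" and one_to_one: "D_Z' Z Z' = {Z}" and i: "1 \<le> i" "i \<le> m"
  shows "\<not> (count_ge A0 (Suc (c i)) = i - 1 \<and> count_ge B0 (Suc (d i)) = i)"
proof
  assume swap: "count_ge A0 (Suc (c i)) = i - 1 \<and> count_ge B0 (Suc (d i)) = i"
  note counts = entry_counts_zero[OF card one_to_one]
  have "i \<le> count_ge A0 (Suc w) \<longleftrightarrow> i \<le> count_ge B0 (Suc w)" if "w \<in> W" for w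
    using that
  proof (rule W_cases)
    fix j assume j: "1 \<le> j" "j \<le> m'"
    show "i \<le> count_ge A0 (Suc (c j)) \<longleftrightarrow> i \<le> count_ge B0 (Suc (c j))"
      using counts(2-4)[of j] swap j card by (cases "j = i") auto
    show "i \<le> count_ge A0 (Suc (d j)) \<longleftrightarrow> i \<le> count_ge B0 (Suc (d j))"
      using counts(1,5,6)[of j] swap i j card by (cases "j = i") auto
  qed
  then show False
    using separated_swap_not_in_D_Z'[OF card one_to_one a_in[of i] b_in[of i]] below_a_iff[of i] below_b_iff[of i] i
    by simp
qed

lemma no_swap_b_a:
  assumes card: "m' = m" and one_to_one: "D_Z' Z Z' = {Z}" and i: "1 \<le> i" "i \<le> m"
  shows "\<not> (count_ge B0 (Suc (d i)) = i - 1 \<and> (i < m \<longrightarrow> count_ge A0 (Suc (c (i + 1))) = i + 1))"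
proof
  assume swap: "count_ge B0 (Suc (d i)) = i - 1 \<and> (i < m \<longrightarrow> count_ge A0 (Suc (c (i + 1))) = i + 1)"
  note counts = entry_counts_zero[OF card one_to_one]
  have "i + 1 \<le> count_ge A0 (Suc w) \<longleftrightarrow> i \<le> count_ge B0 (Suc w)" if "w \<in> W" for w
    using that
  proof (rule W_cases)
    fix j assume j: "1 \<le> j" "j \<le> m'"
    show "i + 1 \<le> count_ge A0 (Suc (c j)) \<longleftrightarrow> i \<le> count_ge B0 (Suc (c j))"
      using counts(2-4)[of j] swap j card by (cases "j = i + 1") auto
    show "i + 1 \<le> count_ge A0 (Suc (d j)) \<longleftrightarrow> i \<le> count_ge B0 (Suc (d j))"
      using counts(1,5,6)[of j] swap i j card by (cases "j = i") auto
  qed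
  then show False
    using separated_swap_not_in_D_Z'[OF card one_to_one a_in[of "i + 1"] b_in[of i]] below_a_iff[of "i + 1"]
      below_b_iff[of i] i by simp
qed

lemma interlaced_zero:
  assumes card: "m' = m" and one_to_one: "D_Z' Z Z' = {Z}" and "w \<in> W"
  shows "count_ge U (Suc w) = count_ge W w"
proof -
  note counts = entry_counts_zero[OF card one_to_one]
  have B0_d: "count_ge B0 (Suc (d i)) = i" if "1 \<le> i" "i \<le> m" for i
    using that(2)
  proof (induction i rule: inc_induct)
    case base
    show ?case using no_swap_b_a[OF card one_to_one, of m] counts(5,6)[of m] that by fastforce
  next
    case (step n)
    have "count_ge A0 (Suc (c (Suc n))) \<noteq> Suc n - 1" using no_swap_a_b[OF card one_to_one, of "Suc n"] step by simp
    then have "count_ge A0 (Suc (c (Suc n))) = Suc n" using counts(3,4)[of "Suc n"] step by fastforce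
    then have "count_ge B0 (Suc (d n)) \<noteq> n - 1" using no_swap_b_a[OF card one_to_one, of n] step that(1) by simp
    then show ?case using counts(5,6)[of n] step that(1) by fastforce
  qed
  have A0_c: "count_ge A0 (Suc (c i)) = i" if "1 \<le> i" "i \<le> m" for i
  proof -
    have "count_ge A0 (Suc (c i)) \<noteq> i - 1" using no_swap_a_b[OF card one_to_one that] B0_d[OF that] by blast
    then show ?thesis using counts(3,4)[OF that] by linarith
  qed
  show ?thesis
  proof (cases "w \<in> C0")
    case True
    then obtain i where i: "1 \<le> i" "i \<le> m'" "w = c i" by (rule obtain_c)
    then show ?thesis using A0_c[of i] counts(2)[of i] count_ge_W_c[of i] count_ge_U[of "Suc w"] card by simp
  next
    case False
    then have "w \<in> D0" using \<open>w \<in> W\<close> by simp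
    then obtain i where i: "1 \<le> i" "i \<le> m'" "w = d i" by (rule obtain_d)
    then show ?thesis using B0_d[of i] counts(1)[of i] count_ge_W_d[of i] count_ge_U[of "Suc w"] card by simp
  qed
qed

section \<open>The maps theta\<close>

abbreviation "theta_plus \<equiv> rank_successor U W"

lemma theta_plus_a: "m' = m + 1 \<Longrightarrow> 1 \<le> i \<Longrightarrow> i \<le> m + 1 \<Longrightarrow> theta_plus (a i) = d i"
  by (rule rank_successor_eqI[OF finite_W]) (simp_all add: d_in count_ge_W_d count_ge_U_a)

lemma theta_plus_b: "m' = m + 1 \<Longrightarrow> 1 \<le> i \<Longrightarrow> i \<le> m \<Longrightarrow> theta_plus (b i) = c (i + 1)"
  by (rule rank_successor_eqI[OF finite_W]) (simp_all add: c_in count_ge_W_c count_ge_U_b)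

lemma theta1_img_eq:
  assumes "m' = m + 1" "M \<subseteq> U"
  shows "theta1_img Z Z' M = theta_plus ` M"
proof
  show "theta1_img Z Z' M \<subseteq> theta_plus ` M"
    unfolding theta1_img_def using theta_plus_a theta_plus_b assms(1) by (auto intro!: image_eqI)
  show "theta_plus ` M \<subseteq> theta1_img Z Z' M"
  proof
    fix y assume "y \<in> theta_plus ` M"
    then obtain x where "x \<in> M" "y = theta_plus x" by blast
    then consider "x \<in> A0" | "x \<in> B0" using assms(2) by blast
    then show "y \<in> theta1_img Z Z' M"
    proof cases
      case 1
      then obtain i where "1 \<le> i" "i \<le> m + 1" "x = a i" by (rule obtain_a)
      then show ?thesis
        unfolding theta1_img_def using \<open>x \<in> M\<close> \<open>y = theta_plus x\<close> theta_plus_a assms(1) by auto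
    next
      case 2
      then obtain i where "1 \<le> i" "i \<le> m" "x = b i" by (rule obtain_b)
      then show ?thesis
        unfolding theta1_img_def using \<open>x \<in> M\<close> \<open>y = theta_plus x\<close> theta_plus_b assms(1) by auto
    qed
  qed
qed

lemma Z'_eq_theta_plus:
  assumes "m' = m + 1"
  shows "Z' = (insert (c 1) (theta_plus ` B0), theta_plus ` A0)"
proof -
  have "theta_plus ` A0 = D0"
  proof
    show "theta_plus ` A0 \<subseteq> D0" using theta_plus_a d_in assms by (auto elim: obtain_a)
    show "D0 \<subseteq> theta_plus ` A0"
    proof
      fix y assume "y \<in> D0"
      then obtain i where "1 \<le> i" "i \<le> m'" "y = d i" by (rule obtain_d)
      then show "y \<in> theta_plus ` A0" using theta_plus_a[of i] a_in[of i] assms by force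
    qed
  qed
  moreover have "insert (c 1) (theta_plus ` B0) = C0"
  proof
    show "insert (c 1) (theta_plus ` B0) \<subseteq> C0" using theta_plus_b c_in assms by (auto elim: obtain_b)
    show "C0 \<subseteq> insert (c 1) (theta_plus ` B0)"
    proof
      fix y assume "y \<in> C0"
      then obtain i where i: "1 \<le> i" "i \<le> m'" "y = c i" by (rule obtain_c)
      show "y \<in> insert (c 1) (theta_plus ` B0)"
      proof (cases "i = 1")
        case False
        then have "y = theta_plus (b (i - 1))" using theta_plus_b[of "i - 1"] i assms by simp
        then show ?thesis using b_in[of "i - 1"] False i assms by simp
      qed (use i in simp)
    qed
  qed
  ultimately show ?thesis by simp
qed

lemma c1_notin_theta_plus: "m' = m + 1 \<Longrightarrow> u \<in> U \<Longrightarrow> theta_plus u \<noteq> c 1"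
  using rank_successor(2)[OF finite_U finite_W, of u] row_entry_count_ge(1)[OF finite_U, of u]
    card_U card_W count_ge_W_c[of 1] by auto

lemma theta_plus_in: "m' = m + 1 \<Longrightarrow> u \<in> U \<Longrightarrow> theta_plus u \<in> W"
  and count_ge_theta_plus: "m' = m + 1 \<Longrightarrow> u \<in> U \<Longrightarrow> count_ge W (theta_plus u) = count_ge U u + 1"
  and inj_on_theta_plus: "m' = m + 1 \<Longrightarrow> inj_on theta_plus U"
  using rank_successor[OF finite_U finite_W] inj_on_rank_successor[OF finite_U finite_W] card_U card_W by simp_all

lemma count_ge_image_theta_plus:
  assumes card: "m' = m + 1" and interlaced: "\<And>w. w \<in> W \<Longrightarrow> count_ge U w + 1 = count_ge W w"
    and "A \<subseteq> U" "w \<in> W"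
  shows "count_ge (theta_plus ` A) w = count_ge A w"
proof (rule count_ge_image)
  show "inj_on theta_plus A" using inj_on_subset[OF inj_on_theta_plus[OF card] assms(3)] .
  show "w \<le> theta_plus u \<longleftrightarrow> w \<le> u" if "u \<in> A" for u
  proof -
    have "u \<in> U" using that assms(3) by blast
    then show ?thesis
      using le_iff_count_ge_le[OF finite_W theta_plus_in[OF card \<open>u \<in> U\<close>], of w]
        le_iff_count_ge_le[OF finite_U \<open>u \<in> U\<close>, of w] count_ge_theta_plus[OF card \<open>u \<in> U\<close>]
        interlaced[OF assms(4), symmetric] by simp
  qed
qed

lemma move_theta_plus:
  assumes card: "m' = m + 1" and "M \<subseteq> U"
  shows "move Z' (theta_plus ` M) = (insert (c 1) (theta_plus ` snd (move Z M)), theta_plus ` fst (move Z M))"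
proof -
  have "c 1 \<notin> theta_plus ` M" using c1_notin_theta_plus[OF card] assms(2) by fastforce
  then have "move (insert (c 1) (theta_plus ` B0), theta_plus ` A0) (theta_plus ` M)
      = (insert (c 1) (theta_plus ` snd (move Z M)), theta_plus ` fst (move Z M))"
    using move_relabel[OF inj_on_theta_plus[OF card] assms(2)] by simp
  then show ?thesis by (simp only: Z'_eq_theta_plus[OF card, symmetric])
qed

lemma Bplus_iff_counts_plus:
  assumes card: "m' = m + 1" and interlaced: "\<And>w. w \<in> W \<Longrightarrow> count_ge U w + 1 = count_ge W w"
    and L: "L \<in> Sbar Z" and L': "L' \<in> Sbar Z'"
  shows "(L, L') \<in> Bplus Z Z' \<longleftrightarrow>
    card (snd L') = card (fst L) \<and> (\<forall>w\<in>W. count_ge (snd L') w = count_ge (fst L) w)"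
proof -
  obtain A B C D where "L = (A, B)" "L' = (C, D)" by fastforce
  have AB: "A \<union> B = U" "A \<inter> B = {}" using Sbar_Un_disjoint[OF regular_Z L] \<open>L = (A, B)\<close> by auto
  have CD: "C \<union> D = W" "C \<inter> D = {}" using Sbar_Un_disjoint[OF regular_Z' L'] \<open>L' = (C, D)\<close> by auto
  have fin: "finite A" "finite B" "finite C" "finite D" using AB CD finite_U finite_W by (metis finite_Un)+
  have "card A + card B = 2 * m + 1" "card C + card D = 2 * m + 2"
    using card_Un_disjoint[of A B] card_Un_disjoint[of C D] AB CD fin card_U card_W card by simp_all
  then have "defect L' = 1 - defect L \<longleftrightarrow> card D = card A"
    using \<open>L = (A, B)\<close> \<open>L' = (C, D)\<close> unfolding defect_def by auto
  then have "(L, L') \<in> Bplus Z Z' \<longleftrightarrow>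
      card D = card A \<and> (\<forall>w\<in>D. count_ge A w = count_ge D w) \<and> (\<forall>w\<in>C. count_ge B w + 1 = count_ge C w)"
    using Bplus_iff[of L L' Z Z'] \<open>L = (A, B)\<close> \<open>L' = (C, D)\<close> fin L L' card by auto
  moreover have "count_ge B w + 1 = count_ge C w \<longleftrightarrow> count_ge D w = count_ge A w" if "w \<in> C \<union> D" for w
    using interlaced[of w] that count_ge_Un_disjoint[of A B w] count_ge_Un_disjoint[of C D w] AB CD fin by auto
  ultimately show ?thesis using \<open>L = (A, B)\<close> \<open>L' = (C, D)\<close> unfolding CD(1)[symmetric] by auto
qed

lemma Bplus_move_iff_theta_plus:
  assumes card: "m' = m + 1" and interlaced: "\<And>w. w \<in> W \<Longrightarrow> count_ge U w + 1 = count_ge W w"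
    and M: "M \<subseteq> U" and L': "L' \<in> Sbar Z'"
  shows "(move Z M, L') \<in> Bplus Z Z' \<longleftrightarrow> L' = move Z' (theta_plus ` M)"
proof -
  define A where "A = fst (move Z M)"
  have L: "move Z M \<in> Sbar Z" using M singles_regular[OF regular_Z] by (simp add: move_in_Sbar)
  have "A \<subseteq> U" "snd L' \<subseteq> W"
    using Sbar_Un_disjoint(1)[OF regular_Z L] Sbar_Un_disjoint(1)[OF regular_Z' L'] unfolding A_def by auto
  have "theta_plus ` A \<subseteq> W" using theta_plus_in[OF card] \<open>A \<subseteq> U\<close> by blast
  have "move Z' (theta_plus ` M) \<in> Sbar Z'"
    using theta_plus_in[OF card] M singles_regular[OF regular_Z'] by (intro move_in_Sbar) auto
  moreover have "snd (move Z' (theta_plus ` M)) = theta_plus ` A" using move_theta_plus[OF card M] A_def by simp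
  moreover note image = count_ge_image_theta_plus[OF card interlaced \<open>A \<subseteq> U\<close>]
    card_image[OF inj_on_subset[OF inj_on_theta_plus[OF card] \<open>A \<subseteq> U\<close>]]
  have "card (snd L') = card A \<and> (\<forall>w\<in>W. count_ge (snd L') w = count_ge A w) \<longleftrightarrow> snd L' = theta_plus ` A"
  proof
    assume "card (snd L') = card A \<and> (\<forall>w\<in>W. count_ge (snd L') w = count_ge A w)"
    then show "snd L' = theta_plus ` A"
      using subset_eq_if_count_ge_eq[OF finite_W \<open>snd L' \<subseteq> W\<close> \<open>theta_plus ` A \<subseteq> W\<close>] image by simp
  qed (use image in simp)
  ultimately show ?thesis
    using Bplus_iff_counts_plus[OF card interlaced L L'] Sbar_eq_iff_snd[OF regular_Z' L'] A_def by simp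
qed

abbreviation "theta_zero \<equiv> rank_successor W U"

lemma theta_zero_c: "m' = m \<Longrightarrow> 1 \<le> i \<Longrightarrow> i \<le> m \<Longrightarrow> theta_zero (c i) = b i"
  by (rule rank_successor_eqI[OF finite_U]) (simp_all add: b_in count_ge_W_c count_ge_U_b)

lemma theta_zero_d: "m' = m \<Longrightarrow> 1 \<le> i \<Longrightarrow> i \<le> m \<Longrightarrow> theta_zero (d i) = a (i + 1)"
  by (rule rank_successor_eqI[OF finite_U]) (simp_all add: a_in count_ge_W_d count_ge_U_a)

lemma theta2_img_eq:
  assumes "m' = m" "N \<subseteq> W"
  shows "theta2_img Z Z' N = theta_zero ` N"
proof
  show "theta2_img Z Z' N \<subseteq> theta_zero ` N"
    unfolding theta2_img_def using theta_zero_c theta_zero_d assms(1) by (auto intro!: image_eqI)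
  show "theta_zero ` N \<subseteq> theta2_img Z Z' N"
  proof
    fix y assume "y \<in> theta_zero ` N"
    then obtain x where "x \<in> N" "y = theta_zero x" by blast
    then consider "x \<in> C0" | "x \<in> D0" using assms(2) by blast
    then show "y \<in> theta2_img Z Z' N"
    proof cases
      case 1
      then obtain i where "1 \<le> i" "i \<le> m'" "x = c i" by (rule obtain_c)
      then show ?thesis
        unfolding theta2_img_def using \<open>x \<in> N\<close> \<open>y = theta_zero x\<close> theta_zero_c assms(1) by auto
    next
      case 2
      then obtain i where "1 \<le> i" "i \<le> m'" "x = d i" by (rule obtain_d)
      then show ?thesis
        unfolding theta2_img_def using \<open>x \<in> N\<close> \<open>y = theta_zero x\<close> theta_zero_d assms(1) by auto
    qed
  qed
qed

lemma Z_eq_theta_zero: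
  assumes "m' = m"
  shows "Z = (insert (a 1) (theta_zero ` D0), theta_zero ` C0)"
proof -
  have "theta_zero ` C0 = B0"
  proof
    show "theta_zero ` C0 \<subseteq> B0" using theta_zero_c b_in assms by (auto elim: obtain_c)
    show "B0 \<subseteq> theta_zero ` C0"
    proof
      fix y assume "y \<in> B0"
      then obtain i where "1 \<le> i" "i \<le> m" "y = b i" by (rule obtain_b)
      then show "y \<in> theta_zero ` C0" using theta_zero_c[of i] c_in[of i] assms by force
    qed
  qed
  moreover have "insert (a 1) (theta_zero ` D0) = A0"
  proof
    show "insert (a 1) (theta_zero ` D0) \<subseteq> A0" using theta_zero_d a_in assms by (auto elim: obtain_d)
    show "A0 \<subseteq> insert (a 1) (theta_zero ` D0)"
    proof
      fix y assume "y \<in> A0"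
      then obtain i where i: "1 \<le> i" "i \<le> m + 1" "y = a i" by (rule obtain_a)
      show "y \<in> insert (a 1) (theta_zero ` D0)"
      proof (cases "i = 1")
        case False
        then have "y = theta_zero (d (i - 1))" using theta_zero_d[of "i - 1"] i assms by simp
        then show ?thesis using d_in[of "i - 1"] False i assms by simp
      qed (use i in simp)
    qed
  qed
  ultimately show ?thesis by simp
qed

lemma a1_notin_theta_zero: "m' = m \<Longrightarrow> w \<in> W \<Longrightarrow> theta_zero w \<noteq> a 1"
  using rank_successor(2)[OF finite_W finite_U, of w] row_entry_count_ge(1)[OF finite_W, of w]
    card_U card_W count_ge_U_a[of 1] by auto

lemma thresholds_zero:
  assumes interlaced: "\<And>w. w \<in> W \<Longrightarrow> count_ge U (Suc w) = count_ge W w" and "m' = m" "u \<in> U"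
  shows "(\<forall>x\<in>U. u \<le> x) \<or> (\<exists>w\<in>W. \<forall>x\<in>U. u \<le> x \<longleftrightarrow> w < x)"
proof (cases "count_ge U u \<le> 2 * m")
  case True
  define w where "w = row_entry W (count_ge U u)"
  have "1 \<le> count_ge U u" using row_entry_count_ge(1)[OF finite_U assms(3)] .
  then have "w \<in> W" "count_ge U (Suc w) = count_ge U u"
    using row_entry_in[OF finite_W] count_ge_row_entry[OF finite_W] interlaced True card_W assms(2)
    unfolding w_def by simp_all
  moreover have "u \<le> x \<longleftrightarrow> w < x" if "x \<in> U" for x
    using le_iff_count_ge_le[OF finite_U that, of u] le_iff_count_ge_le[OF finite_U that, of "Suc w"]
      calculation(2) by (simp add: Suc_le_eq)
  ultimately show ?thesis by blast
next
  case False
  then have "count_ge U x \<le> count_ge U u" for x using count_ge_le_card[OF finite_U, of x] card_U by simp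
  then show ?thesis using le_iff_count_ge_le[OF finite_U] by blast
qed

lemma theta_zero_in: "m' = m \<Longrightarrow> w \<in> W \<Longrightarrow> theta_zero w \<in> U"
  and count_ge_theta_zero: "m' = m \<Longrightarrow> w \<in> W \<Longrightarrow> count_ge U (theta_zero w) = count_ge W w + 1"
  and inj_on_theta_zero: "m' = m \<Longrightarrow> inj_on theta_zero W"
  using rank_successor[OF finite_W finite_U] inj_on_rank_successor[OF finite_W finite_U] card_U card_W by simp_all

lemma count_ge_image_theta_zero:
  assumes card: "m' = m" and interlaced: "\<And>w. w \<in> W \<Longrightarrow> count_ge U (Suc w) = count_ge W w"
    and "D \<subseteq> W" "w \<in> W"
  shows "count_ge (insert (a 1) (theta_zero ` D)) (Suc w) = count_ge D (Suc w) + 1"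
proof -
  have "a 1 \<in> U" using a_in[of 1] by simp
  have "count_ge (theta_zero ` D) (Suc w) = count_ge D (Suc w)"
  proof (rule count_ge_image)
    show "inj_on theta_zero D" using inj_on_subset[OF inj_on_theta_zero[OF card] assms(3)] .
    show "Suc w \<le> theta_zero v \<longleftrightarrow> Suc w \<le> v" if "v \<in> D" for v
    proof -
      have "v \<in> W" using that assms(3) by blast
      then show ?thesis
        using le_iff_count_ge_le[OF finite_U theta_zero_in[OF card \<open>v \<in> W\<close>], of "Suc w"]
          le_iff_count_ge_le[OF finite_W \<open>v \<in> W\<close>, of w] le_iff_count_ge_le[OF finite_W assms(4), of v]
          count_ge_theta_zero[OF card \<open>v \<in> W\<close>] interlaced[OF assms(4)]
        by (auto simp: Suc_le_eq)
    qed
  qed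
  moreover have "Suc w \<le> a 1"
    using le_iff_count_ge_le[OF finite_U \<open>a 1 \<in> U\<close>, of "Suc w"] count_ge_U_a[of 1] interlaced[OF assms(4)]
      row_entry_count_ge(1)[OF finite_W assms(4)] by simp
  moreover have "a 1 \<notin> theta_zero ` D" using a1_notin_theta_zero[OF card] assms(3) by fastforce
  ultimately show ?thesis using count_ge_insert[of "theta_zero ` D"] finite_subset[OF assms(3) finite_W] by simp
qed

lemma move_theta_zero:
  assumes card: "m' = m" and "N \<subseteq> W"
  shows "move Z (theta_zero ` N) = (insert (a 1) (theta_zero ` snd (move Z' N)), theta_zero ` fst (move Z' N))"
proof -
  have "a 1 \<notin> theta_zero ` N" using a1_notin_theta_zero[OF card] assms(2) by fastforce
  then have "move (insert (a 1) (theta_zero ` D0), theta_zero ` C0) (theta_zero ` N)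
      = (insert (a 1) (theta_zero ` snd (move Z' N)), theta_zero ` fst (move Z' N))"
    using move_relabel[OF inj_on_theta_zero[OF card] assms(2)] by simp
  then show ?thesis by (simp only: Z_eq_theta_zero[OF card, symmetric])
qed

lemma Bplus_iff_counts_zero:
  assumes card: "m' = m" and interlaced: "\<And>w. w \<in> W \<Longrightarrow> count_ge U (Suc w) = count_ge W w"
    and L: "L \<in> Sbar Z" and L': "L' \<in> Sbar Z'"
  shows "(L, L') \<in> Bplus Z Z' \<longleftrightarrow>
    card (fst L) = card (snd L') + 1 \<and> (\<forall>w\<in>W. count_ge (fst L) (Suc w) = count_ge (snd L') (Suc w) + 1)"
proof -
  obtain A B C D where "L = (A, B)" "L' = (C, D)" by fastforce
  have AB: "A \<union> B = U" "A \<inter> B = {}" using Sbar_Un_disjoint[OF regular_Z L] \<open>L = (A, B)\<close> by auto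
  have CD: "C \<union> D = W" "C \<inter> D = {}" using Sbar_Un_disjoint[OF regular_Z' L'] \<open>L' = (C, D)\<close> by auto
  have fin: "finite A" "finite B" "finite C" "finite D" using AB CD finite_U finite_W by (metis finite_Un)+
  have "card A + card B = 2 * m + 1" "card C + card D = 2 * m"
    using card_Un_disjoint[of A B] card_Un_disjoint[of C D] AB CD fin card_U card_W card by simp_all
  then have "defect L' = 1 - defect L \<longleftrightarrow> card A = card D + 1"
    using \<open>L = (A, B)\<close> \<open>L' = (C, D)\<close> unfolding defect_def by auto
  then have "(L, L') \<in> Bplus Z Z' \<longleftrightarrow> card A = card D + 1 \<and>
      (\<forall>w\<in>D. count_ge A (Suc w) = count_ge D w) \<and> (\<forall>w\<in>C. count_ge B (Suc w) + 1 = count_ge C w)"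
    using Bplus_iff[of L L' Z Z'] \<open>L = (A, B)\<close> \<open>L' = (C, D)\<close> fin L L' card by auto
  moreover have "count_ge A (Suc w) = count_ge D w \<longleftrightarrow> count_ge A (Suc w) = count_ge D (Suc w) + 1"
    if "w \<in> D" for w
    using count_ge_Suc_in[OF fin(4) that] by simp
  moreover have "count_ge B (Suc w) + 1 = count_ge C w \<longleftrightarrow> count_ge A (Suc w) = count_ge D (Suc w) + 1"
    if "w \<in> C" for w
  proof -
    have "w \<in> W" "w \<notin> D" using that CD by auto
    then have "count_ge A (Suc w) + count_ge B (Suc w) = count_ge C w + count_ge D (Suc w)"
      using interlaced[of w] count_ge_Un_disjoint[of A B "Suc w"] count_ge_Un_disjoint[of C D w]
        count_ge_Suc_notin[of w D] AB CD fin by simp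
    then show ?thesis by arith
  qed
  ultimately show ?thesis using \<open>L = (A, B)\<close> \<open>L' = (C, D)\<close> unfolding CD(1)[symmetric] by auto
qed

lemma Bplus_move_iff_theta_zero:
  assumes card: "m' = m" and interlaced: "\<And>w. w \<in> W \<Longrightarrow> count_ge U (Suc w) = count_ge W w"
    and N: "N \<subseteq> W" and L: "L \<in> Sbar Z"
  shows "(L, move Z' N) \<in> Bplus Z Z' \<longleftrightarrow> L = move Z (theta_zero ` N)"
proof -
  define D where "D = snd (move Z' N)"
  define As where "As = insert (a 1) (theta_zero ` D)"
  have L': "move Z' N \<in> Sbar Z'" using N singles_regular[OF regular_Z'] by (simp add: move_in_Sbar)
  have "D \<subseteq> W" "fst L \<subseteq> U"
    using Sbar_Un_disjoint(1)[OF regular_Z' L'] Sbar_Un_disjoint(1)[OF regular_Z L] unfolding D_def by auto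
  have "As \<subseteq> U" using theta_zero_in[OF card] \<open>D \<subseteq> W\<close> a_in[of 1] unfolding As_def by auto
  have "a 1 \<notin> theta_zero ` D" using a1_notin_theta_zero[OF card] \<open>D \<subseteq> W\<close> by fastforce
  then have "card As = card D + 1"
    using card_image[OF inj_on_subset[OF inj_on_theta_zero[OF card] \<open>D \<subseteq> W\<close>]]
      finite_subset[OF \<open>D \<subseteq> W\<close> finite_W] unfolding As_def by simp
  note image = count_ge_image_theta_zero[OF card interlaced \<open>D \<subseteq> W\<close>, folded As_def]
  have "move Z (theta_zero ` N) \<in> Sbar Z"
    using theta_zero_in[OF card] N singles_regular[OF regular_Z] by (intro move_in_Sbar) auto
  moreover have "fst (move Z (theta_zero ` N)) = As" using move_theta_zero[OF card N] D_def As_def by simp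
  moreover have "card (fst L) = card D + 1 \<and> (\<forall>w\<in>W. count_ge (fst L) (Suc w) = count_ge D (Suc w) + 1)
      \<longleftrightarrow> fst L = As"
  proof
    assume "card (fst L) = card D + 1 \<and> (\<forall>w\<in>W. count_ge (fst L) (Suc w) = count_ge D (Suc w) + 1)"
    then show "fst L = As"
      using subset_eq_if_count_ge_Suc_eq[OF finite_U \<open>fst L \<subseteq> U\<close> \<open>As \<subseteq> U\<close>, of W]
        thresholds_zero[OF interlaced card] image \<open>card As = card D + 1\<close> by simp
  qed (use image \<open>card As = card D + 1\<close> in simp)
  ultimately show ?thesis
    using Bplus_iff_counts_zero[OF card interlaced L L'] Sbar_eq_iff_fst[OF regular_Z L] D_def by simp
qed

end

theorem lemma0902:
  fixes Z Z' :: symbol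
  assumes "special1 Z" and "special0 Z'"
    and "card (fst Z') = card (snd Z) \<or> card (fst Z') = card (snd Z) + 1"
    and "regular Z" and "regular Z'"
    and "D_Z Z Z' = {Z'}" and "D_Z' Z Z' = {Z}"
  shows "(card (fst Z') = card (snd Z) + 1 \<longrightarrow>
           (\<forall>M. M \<subseteq> singles Z \<longrightarrow> (\<forall>L' \<in> Sbar Z'.
              (move Z M, L') \<in> Bplus Z Z' \<longleftrightarrow> L' = move Z' (theta1_img Z Z' M))))
       \<and> (card (fst Z') = card (snd Z) \<longrightarrow>
           (\<forall>N. N \<subseteq> singles Z' \<longrightarrow> (\<forall>L \<in> Sbar Z.
              (L, move Z' N) \<in> Bplus Z Z' \<longleftrightarrow> L = move Z (theta2_img Z Z' N))))"
proof -
  interpret regular_special_pair Z Z' using assms(1,2,4,5) by unfold_locales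
  show ?thesis
  proof (intro conjI impI allI ballI)
    fix M L' assume card: "card (fst Z') = card (snd Z) + 1" and "M \<subseteq> singles Z" "L' \<in> Sbar Z'"
    then show "(move Z M, L') \<in> Bplus Z Z' \<longleftrightarrow> L' = move Z' (theta1_img Z Z' M)"
      using Bplus_move_iff_theta_plus[OF card interlaced_plus[OF card assms(6)]] theta1_img_eq[OF card]
        singles_regular[OF assms(4)] by simp
  next
    fix N L assume card: "card (fst Z') = card (snd Z)" and "N \<subseteq> singles Z'" "L \<in> Sbar Z"
    then show "(L, move Z' N) \<in> Bplus Z Z' \<longleftrightarrow> L = move Z (theta2_img Z Z' N)"
      using Bplus_move_iff_theta_zero[OF card interlaced_zero[OF card assms(7)]] theta2_img_eq[OF card]
        singles_regular[OF assms(5)] by simp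
  qed
qed

end
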